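(* Let $\mathcal S$ be a subset of a finite multi-algebra $\mathcal A=\mathcal A_1\times\cdots\times\mathcal A_m$ and $H=(h_1,\dots,h_m)$ a multi-refinement of $\mathcal S$. (1) If for every slice $\mathcal S_i$ and every $\diamond$-consistent three-variable network $N$ over $\mathcal S_i$, the network $h_i(N)$ is still $\diamond$-consistent, then $\mathcal S$ is composition stable through $H$. (2) If every bi-slice $\mathcal S_{i,j}$ is projection stable through $(h_i,h_j)$, then $\mathcal S$ is projection stable through $H$.
   Context: A finite non-associative algebra is a tuple $(\mathcal A,\cup,\neg,\emptyset,\mathcal B,\diamond,\overline{\cdot},e)$ where $(\mathcal A,\cup,\neg,\emptyset,\mathcal B)$ is a finite Boolean algebra and for all $x,y,z$: $\overline{\overline x}=x$, $\overline{x\cup y}=\overline x\cup\overline y$, $\overline{x\diamond y}=\overline y\diamond\overline x$, $e\diamond x=x\diamond e=x$, $x\diamond(y\cup z)=(x\diamond y)\cup(x\diamond z)$, $(x\diamond y)\cap\overline z=\emptyset\iff(y\diamond z)\cap\overline x=\emptyset$. $r\subseteq r'$ means $r\cup r'=r'$. A projection operator from $\mathcal A$ to $\mathcal A'$ is a map $\Rsh$ with $\Rsh(r\cup r')=\Rsh r\cup\Rsh r'$ and $\Rsh\overline r=\overline{\Rsh r}$. A finite multi-algebra is a product $\mathcal A_1\times\cdots\times\mathcal A_m$ ($m\ge1$; $m=1$ gives a single algebra) of finite non-associative algebras with projection operators $\Rsh_i^j:\mathcal A_i\to\mathcal A_j$ for distinct $i,j$; operations componentwise on $R=(R_1,\dots,R_m)$.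 $R$ is $\Rsh$-consistent if $R_j\subseteq\Rsh_i^jR_i$ for all distinct $i,j$ and all $R_i\ne\emptyset$. A network over $\mathcal S$ is a finite set $E$ of variables with $N^{xy}\in\mathcal S$ for all distinct $x,y$, $N^{yx}=\overline{N^{xy}}$; slice $N_i^{xy}=(N^{xy})_i$. $N$ is $\diamond$-consistent if for each $i$, $N_i^{xz}\subseteq N_i^{xy}\diamond N_i^{yz}$ for all distinct $x,y,z$ and $N_i^{xy}\neq\emptyset$ for all $x,y$. Slices $\mathcal S_i=\{R_i:R\in\mathcal S\}$; bi-slice $\mathcal S_{i,j}=\{(R_i,R_j):R\in\mathcal S\}$, a subset of the multi-algebra $\mathcal A_i\times\mathcal A_j$ with projections $\Rsh_i^j,\Rsh_j^i$. A refinement of a subset $\mathcal S$ is a function $H$ on $\mathcal S$ with $H(R)\subseteq R$ and $H(R)$ has no empty component whenever $R$ has none. A multi-refinement is a refinement of the form $H(R)=(h_1(R_1),\dots,h_m(R_m))$ with each $h_i$ a refinement of $\mathcal S_i$. $H(N)$ replaces each $N^{xy}$ by $H(N^{xy})$ (similarly $h_i(N)$ for networks over $\mathcal S_i$). $\mathcal S$ is composition stable through $H$ if $H(N)$ is $\diamond$-consistent for every $\diamond$-consistent network $N$ over $\mathcal S$; projection stable through $H$ if $H(R)$ is $\Rsh$-consistent for every $\Rsh$-consistent $R\in\mathcal S$. *)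

theory Defs
  imports "HOL-Library.FuncSet"
begin

text \<open>A (finite) non-associative algebra, given by its carrier set inside a
 common ambient type 'a together with the Boolean operations (join = union,
 complement, empty relation, full relation), composition, converse and identity.\<close>

record 'a nalg =
  carrier :: "'a set"
  join :: "'a \<Rightarrow> 'a \<Rightarrow> 'a"
  neg :: "'a \<Rightarrow> 'a"
  bot :: "'a"
  top :: "'a"
  comp :: "'a \<Rightarrow> 'a \<Rightarrow> 'a"
  conv :: "'a \<Rightarrow> 'a"
  one :: "'a"

definition meet :: "'a nalg \<Rightarrow> 'a \<Rightarrow> 'a \<Rightarrow> 'a" where
  "meet A x y = neg A (join A (neg A x) (neg A y))"

definition subrel :: "'a nalg \<Rightarrow> 'a \<Rightarrow> 'a \<Rightarrow> bool" where
  "subrel A r r' \<longleftrightarrow> join A r r' = r'"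

definition boolean_alg :: "'a nalg \<Rightarrow> bool" where
  "boolean_alg A \<longleftrightarrow>
     bot A \<in> carrier A \<and> top A \<in> carrier A \<and>
     (\<forall>x\<in>carrier A. neg A x \<in> carrier A) \<and>
     (\<forall>x\<in>carrier A. \<forall>y\<in>carrier A. join A x y \<in> carrier A) \<and>
     (\<forall>x\<in>carrier A. \<forall>y\<in>carrier A. join A x y = join A y x) \<and>
     (\<forall>x\<in>carrier A. \<forall>y\<in>carrier A. meet A x y = meet A y x) \<and>
     (\<forall>x\<in>carrier A. \<forall>y\<in>carrier A. \<forall>z\<in>carrier A.
         join A x (meet A y z) = meet A (join A x y) (join A x z)) \<and>
     (\<forall>x\<in>carrier A. \<forall>y\<in>carrier A. \<forall>z\<in>carrier A.
         meet A x (join A y z) = join A (meet A x y) (meet A x z)) \<and>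
     (\<forall>x\<in>carrier A. join A x (bot A) = x) \<and>
     (\<forall>x\<in>carrier A. meet A x (top A) = x) \<and>
     (\<forall>x\<in>carrier A. join A x (neg A x) = top A) \<and>
     (\<forall>x\<in>carrier A. meet A x (neg A x) = bot A)"

definition fin_nalg :: "'a nalg \<Rightarrow> bool" where
  "fin_nalg A \<longleftrightarrow>
     finite (carrier A) \<and> boolean_alg A \<and>
     one A \<in> carrier A \<and>
     (\<forall>x\<in>carrier A. conv A x \<in> carrier A) \<and>
     (\<forall>x\<in>carrier A. \<forall>y\<in>carrier A. comp A x y \<in> carrier A) \<and>
     (\<forall>x\<in>carrier A. conv A (conv A x) = x) \<and>
     (\<forall>x\<in>carrier A. \<forall>y\<in>carrier A. conv A (join A x y) = join A (conv A x) (conv A y)) \<and>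
     (\<forall>x\<in>carrier A. \<forall>y\<in>carrier A. conv A (comp A x y) = comp A (conv A y) (conv A x)) \<and>
     (\<forall>x\<in>carrier A. comp A (one A) x = x \<and> comp A x (one A) = x) \<and>
     (\<forall>x\<in>carrier A. \<forall>y\<in>carrier A. \<forall>z\<in>carrier A.
         comp A x (join A y z) = join A (comp A x y) (comp A x z)) \<and>
     (\<forall>x\<in>carrier A. \<forall>y\<in>carrier A. \<forall>z\<in>carrier A.
         (meet A (comp A x y) (conv A z) = bot A) \<longleftrightarrow> (meet A (comp A y z) (conv A x) = bot A))"

definition proj_op :: "'a nalg \<Rightarrow> 'a nalg \<Rightarrow> ('a \<Rightarrow> 'a) \<Rightarrow> bool" where
  "proj_op A A' p \<longleftrightarrow>
     (\<forall>r\<in>carrier A. p r \<in> carrier A') \<and>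
     (\<forall>r\<in>carrier A. \<forall>r'\<in>carrier A. p (join A r r') = join A' (p r) (p r')) \<and>
     (\<forall>r\<in>carrier A. p (conv A r) = conv A' (p r))"

definition multi_alg :: "(nat \<Rightarrow> 'a nalg) \<Rightarrow> (nat \<Rightarrow> nat \<Rightarrow> 'a \<Rightarrow> 'a) \<Rightarrow> nat \<Rightarrow> bool" where
  "multi_alg A P m \<longleftrightarrow> m \<ge> 1 \<and> (\<forall>i<m. fin_nalg (A i)) \<and>
     (\<forall>i<m. \<forall>j<m. i \<noteq> j \<longrightarrow> proj_op (A i) (A j) (P i j))"

definition mcarrier :: "(nat \<Rightarrow> 'a nalg) \<Rightarrow> nat \<Rightarrow> (nat \<Rightarrow> 'a) set" where
  "mcarrier A m = (\<Pi>\<^sub>E i\<in>{..<m}. carrier (A i))"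

definition mconv :: "(nat \<Rightarrow> 'a nalg) \<Rightarrow> nat \<Rightarrow> (nat \<Rightarrow> 'a) \<Rightarrow> (nat \<Rightarrow> 'a)" where
  "mconv A m R = (\<lambda>i\<in>{..<m}. conv (A i) (R i))"

definition proj_consistent ::
  "(nat \<Rightarrow> 'a nalg) \<Rightarrow> (nat \<Rightarrow> nat \<Rightarrow> 'a \<Rightarrow> 'a) \<Rightarrow> nat \<Rightarrow> (nat \<Rightarrow> 'a) \<Rightarrow> bool" where
  "proj_consistent A P m R \<longleftrightarrow>
     (\<forall>i<m. \<forall>j<m. i \<noteq> j \<longrightarrow> R i \<noteq> bot (A i) \<longrightarrow> subrel (A j) (R j) (P i j (R i)))"

definition snetwork :: "'a nalg \<Rightarrow> 'a set \<Rightarrow> 'v set \<Rightarrow> ('v \<Rightarrow> 'v \<Rightarrow> 'a) \<Rightarrow> bool" where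
  "snetwork A T E N \<longleftrightarrow> finite E \<and>
     (\<forall>x\<in>E. \<forall>y\<in>E. x \<noteq> y \<longrightarrow> N x y \<in> T \<and> N y x = conv A (N x y))"

definition sdcons :: "'a nalg \<Rightarrow> 'v set \<Rightarrow> ('v \<Rightarrow> 'v \<Rightarrow> 'a) \<Rightarrow> bool" where
  "sdcons A E N \<longleftrightarrow>
     (\<forall>x\<in>E. \<forall>y\<in>E. \<forall>z\<in>E. x \<noteq> y \<and> y \<noteq> z \<and> x \<noteq> z \<longrightarrow>
         subrel A (N x z) (comp A (N x y) (N y z))) \<and>
     (\<forall>x\<in>E. \<forall>y\<in>E. x \<noteq> y \<longrightarrow> N x y \<noteq> bot A)"

definition mnetwork ::
  "(nat \<Rightarrow> 'a nalg) \<Rightarrow> nat \<Rightarrow> (nat \<Rightarrow> 'a) set \<Rightarrow> 'v set \<Rightarrow> ('v \<Rightarrow> 'v \<Rightarrow> nat \<Rightarrow> 'a) \<Rightarrow> bool" where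
  "mnetwork A m S E N \<longleftrightarrow> finite E \<and>
     (\<forall>x\<in>E. \<forall>y\<in>E. x \<noteq> y \<longrightarrow> N x y \<in> S \<and> N y x = mconv A m (N x y))"

definition mdcons :: "(nat \<Rightarrow> 'a nalg) \<Rightarrow> nat \<Rightarrow> 'v set \<Rightarrow> ('v \<Rightarrow> 'v \<Rightarrow> nat \<Rightarrow> 'a) \<Rightarrow> bool" where
  "mdcons A m E N \<longleftrightarrow> (\<forall>i<m. sdcons (A i) E (\<lambda>x y. N x y i))"

definition slice :: "(nat \<Rightarrow> 'a) set \<Rightarrow> nat \<Rightarrow> 'a set" where
  "slice S i = (\<lambda>R. R i) ` S"

definition srefinement :: "'a nalg \<Rightarrow> 'a set \<Rightarrow> ('a \<Rightarrow> 'a) \<Rightarrow> bool" where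
  "srefinement A T h \<longleftrightarrow>
     (\<forall>r\<in>T. h r \<in> carrier A \<and> subrel A (h r) r \<and> (r \<noteq> bot A \<longrightarrow> h r \<noteq> bot A))"

definition mrefinement ::
  "(nat \<Rightarrow> 'a nalg) \<Rightarrow> nat \<Rightarrow> (nat \<Rightarrow> 'a) set \<Rightarrow> ((nat \<Rightarrow> 'a) \<Rightarrow> (nat \<Rightarrow> 'a)) \<Rightarrow> bool" where
  "mrefinement A m S H \<longleftrightarrow>
     (\<forall>R\<in>S. H R \<in> mcarrier A m \<and> (\<forall>i<m. subrel (A i) (H R i) (R i)) \<and>
        ((\<forall>i<m. R i \<noteq> bot (A i)) \<longrightarrow> (\<forall>i<m. H R i \<noteq> bot (A i))))"

definition multi_refinement ::
  "(nat \<Rightarrow> 'a nalg) \<Rightarrow> nat \<Rightarrow> (nat \<Rightarrow> 'a) set \<Rightarrow> ((nat \<Rightarrow> 'a) \<Rightarrow> (nat \<Rightarrow> 'a))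
     \<Rightarrow> (nat \<Rightarrow> 'a \<Rightarrow> 'a) \<Rightarrow> bool" where
  "multi_refinement A m S H h \<longleftrightarrow> mrefinement A m S H \<and>
     (\<forall>i<m. srefinement (A i) (slice S i) (h i)) \<and>
     (\<forall>R\<in>S. H R = (\<lambda>i\<in>{..<m}. h i (R i)))"

definition comp_stable ::
  "'v itself \<Rightarrow> (nat \<Rightarrow> 'a nalg) \<Rightarrow> nat \<Rightarrow> (nat \<Rightarrow> 'a) set \<Rightarrow> ((nat \<Rightarrow> 'a) \<Rightarrow> (nat \<Rightarrow> 'a)) \<Rightarrow> bool" where
  "comp_stable _ A m S H \<longleftrightarrow>
     (\<forall>(E::'v set) N. mnetwork A m S E N \<longrightarrow> mdcons A m E N \<longrightarrow>
        mdcons A m E (\<lambda>x y. H (N x y)))"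

definition proj_stable ::
  "(nat \<Rightarrow> 'a nalg) \<Rightarrow> (nat \<Rightarrow> nat \<Rightarrow> 'a \<Rightarrow> 'a) \<Rightarrow> nat \<Rightarrow> (nat \<Rightarrow> 'a) set
     \<Rightarrow> ((nat \<Rightarrow> 'a) \<Rightarrow> (nat \<Rightarrow> 'a)) \<Rightarrow> bool" where
  "proj_stable A P m S H \<longleftrightarrow>
     (\<forall>R\<in>S. proj_consistent A P m R \<longrightarrow> proj_consistent A P m (H R))"

text \<open>The bi-slice S_{i,j}, viewed as a subset of the two-component multi-algebra
 A_i x A_j (component 0 = A_i, component 1 = A_j) with projections P i j, P j i.\<close>

definition bi_alg :: "(nat \<Rightarrow> 'a nalg) \<Rightarrow> nat \<Rightarrow> nat \<Rightarrow> nat \<Rightarrow> 'a nalg" where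
  "bi_alg A i j = (\<lambda>k. if k = 0 then A i else A j)"

definition bi_proj :: "(nat \<Rightarrow> nat \<Rightarrow> 'a \<Rightarrow> 'a) \<Rightarrow> nat \<Rightarrow> nat \<Rightarrow> nat \<Rightarrow> nat \<Rightarrow> 'a \<Rightarrow> 'a" where
  "bi_proj P i j = (\<lambda>k l. if k = 0 then P i j else P j i)"

definition bi_slice :: "(nat \<Rightarrow> 'a) set \<Rightarrow> nat \<Rightarrow> nat \<Rightarrow> (nat \<Rightarrow> 'a) set" where
  "bi_slice S i j = (\<lambda>R. \<lambda>k\<in>{..<2::nat}. if k = 0 then R i else R j) ` S"

definition bi_ref :: "(nat \<Rightarrow> 'a \<Rightarrow> 'a) \<Rightarrow> nat \<Rightarrow> nat \<Rightarrow> (nat \<Rightarrow> 'a) \<Rightarrow> (nat \<Rightarrow> 'a)" where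
  "bi_ref h i j = (\<lambda>R. \<lambda>k\<in>{..<2::nat}. if k = 0 then h i (R 0) else h j (R 1))"

end

theory Submission
  imports Defs
begin

text \<open>Both stability notions are local.  Composition consistency of a network is a condition
 on its triangles, slice by slice: a triangle of an arbitrary network, relabelled by \<open>{0,1,2}\<close>, is
 a three-variable network over a slice.  Projection consistency of a relation is a condition on
 pairs of its components, i.e. on its images in the bi-slices.\<close>

lemma sdcons_cong:
  assumes "\<And>x y. x \<in> E \<Longrightarrow> y \<in> E \<Longrightarrow> x \<noteq> y \<Longrightarrow> N x y = N' x y"
  shows "sdcons A E N \<longleftrightarrow> sdcons A E N'"
  using assms unfolding sdcons_def by simp

lemma sdcons_subset: "sdcons A E N \<Longrightarrow> F \<subseteq> E \<Longrightarrow> sdcons A F N"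
  unfolding sdcons_def by blast

lemma snetwork_subset: "snetwork A T E N \<Longrightarrow> F \<subseteq> E \<Longrightarrow> snetwork A T F N"
  unfolding snetwork_def by (meson finite_subset subsetD)

lemma sdcons_reindex:
  assumes "inj_on g F"
  shows "sdcons A (g ` F) N \<longleftrightarrow> sdcons A F (\<lambda>a b. N (g a) (g b))"
  unfolding sdcons_def by (auto simp: inj_on_eq_iff[OF assms])

lemma snetwork_reindex:
  assumes "inj_on g F"
  shows "snetwork A T (g ` F) N \<longleftrightarrow> snetwork A T F (\<lambda>a b. N (g a) (g b))"
  unfolding snetwork_def by (auto simp: inj_on_eq_iff[OF assms] finite_image_iff[OF assms])

lemma sdcons_refine_if_triangles:
  assumes ref: "srefinement A T h"
    and triangles: "\<forall>(F::nat set) M. card F = 3 \<longrightarrow> snetwork A T F M \<longrightarrow>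
                      sdcons A F M \<longrightarrow> sdcons A F (\<lambda>a b. h (M a b))"
    and net: "snetwork A T E N" and cons: "sdcons A E N"
  shows "sdcons A E (\<lambda>x y. h (N x y))"
  unfolding sdcons_def
proof (intro conjI ballI impI)
  \<comment> \<open>Nonemptiness needs the refinement property: triangles are of no use when \<open>card E = 2\<close>.\<close>
  fix x y assume "x \<in> E" "y \<in> E" "x \<noteq> y"
  then have "N x y \<in> T" "N x y \<noteq> bot A"
    using net cons unfolding snetwork_def sdcons_def by blast+
  then show "h (N x y) \<noteq> bot A"
    using ref unfolding srefinement_def by blast
next
  fix x y z assume xyz: "x \<in> E" "y \<in> E" "z \<in> E" "x \<noteq> y \<and> y \<noteq> z \<and> x \<noteq> z"
  define g :: "nat \<Rightarrow> _" where "g a = (if a = 0 then x else if a = 1 then y else z)" for a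
  have inj: "inj_on g {0, 1, 2}" and img: "g ` {0, 1, 2} = {x, y, z}"
    using xyz by (auto simp: g_def inj_on_def)
  have triangle: "{x, y, z} \<subseteq> E"
    using xyz by simp
  have "snetwork A T {0, 1, 2} (\<lambda>a b. N (g a) (g b))"
    using snetwork_subset[OF net triangle] unfolding snetwork_reindex[OF inj, symmetric] img .
  moreover have "sdcons A {0, 1, 2} (\<lambda>a b. N (g a) (g b))"
    using sdcons_subset[OF cons triangle] unfolding sdcons_reindex[OF inj, symmetric] img .
  ultimately have "sdcons A {0, 1, 2} (\<lambda>a b. h (N (g a) (g b)))"
    by (intro triangles[rule_format]) simp_all
  then have "sdcons A {x, y, z} (\<lambda>x y. h (N x y))"
    by (simp only: img[symmetric] sdcons_reindex[OF inj])
  then show "subrel A (h (N x z)) (comp A (h (N x y)) (h (N y z)))"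
    using xyz unfolding sdcons_def by blast
qed

lemma snetwork_slice:
  assumes "mnetwork A m S E N" and "i < m"
  shows "snetwork (A i) (slice S i) E (\<lambda>x y. N x y i)"
  unfolding snetwork_def
proof (intro conjI ballI impI)
  show "finite E"
    using assms(1) unfolding mnetwork_def by blast
  fix x y assume "x \<in> E" "y \<in> E" "x \<noteq> y"
  then have "N x y \<in> S" "N y x = mconv A m (N x y)"
    using assms(1) unfolding mnetwork_def by blast+
  then show "N x y i \<in> slice S i" "N y x i = conv (A i) (N x y i)"
    using assms(2) unfolding slice_def mconv_def by auto
qed

lemma multi_refinement_apply:
  "multi_refinement A m S H h \<Longrightarrow> R \<in> S \<Longrightarrow> i < m \<Longrightarrow> H R i = h i (R i)"
  unfolding multi_refinement_def by auto

lemma comp_stable_if_slices_triangle_stable: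
  assumes H: "multi_refinement A m S H h"
    and triangles: "\<forall>i<m. \<forall>(F::nat set) M. card F = 3 \<longrightarrow> snetwork (A i) (slice S i) F M \<longrightarrow>
                      sdcons (A i) F M \<longrightarrow> sdcons (A i) F (\<lambda>a b. h i (M a b))"
  shows "comp_stable TYPE('v) A m S H"
  unfolding comp_stable_def mdcons_def
proof (intro allI impI)
  fix E :: "'v set" and N i
  assume net: "mnetwork A m S E N" and cons: "\<forall>i<m. sdcons (A i) E (\<lambda>x y. N x y i)" and "i < m"
  have "srefinement (A i) (slice S i) (h i)"
    using H \<open>i < m\<close> unfolding multi_refinement_def by blast
  from sdcons_refine_if_triangles[OF this triangles[THEN spec, THEN mp, OF \<open>i < m\<close>]
      snetwork_slice[OF net \<open>i < m\<close>]]
  have refined: "sdcons (A i) E (\<lambda>x y. h i (N x y i))"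
    using cons \<open>i < m\<close> by blast
  have agree: "H (N x y) i = h i (N x y i)" if "x \<in> E" "y \<in> E" "x \<noteq> y" for x y
    using that net multi_refinement_apply[OF H _ \<open>i < m\<close>] unfolding mnetwork_def by blast
  show "sdcons (A i) E (\<lambda>x y. H (N x y) i)"
    by (rule iffD2[OF sdcons_cong refined]) (use agree in simp)
qed

definition bi_pair :: "(nat \<Rightarrow> 'a) \<Rightarrow> nat \<Rightarrow> nat \<Rightarrow> nat \<Rightarrow> 'a" where
  "bi_pair R i j = (\<lambda>k\<in>{..<2::nat}. if k = 0 then R i else R j)"

lemma bi_pair_in_bi_slice: "R \<in> S \<Longrightarrow> bi_pair R i j \<in> bi_slice S i j"
  unfolding bi_pair_def bi_slice_def by (rule imageI)

lemma bi_ref_bi_pair: "bi_ref h i j (bi_pair R i j) = bi_pair (\<lambda>k. h k (R k)) i j"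
  unfolding bi_ref_def bi_pair_def by auto

lemma proj_consistent_bi_pair:
  "proj_consistent (bi_alg A i j) (bi_proj P i j) 2 (bi_pair R i j) \<longleftrightarrow>
     (R i \<noteq> bot (A i) \<longrightarrow> subrel (A j) (R j) (P i j (R i))) \<and>
     (R j \<noteq> bot (A j) \<longrightarrow> subrel (A i) (R i) (P j i (R j)))"
  unfolding proj_consistent_def bi_alg_def bi_proj_def bi_pair_def
  by (auto simp: less_2_cases_iff)

lemma proj_consistent_iff_bi_pairs:
  "proj_consistent A P m R \<longleftrightarrow>
     (\<forall>i<m. \<forall>j<m. i \<noteq> j \<longrightarrow> proj_consistent (bi_alg A i j) (bi_proj P i j) 2 (bi_pair R i j))"
  unfolding proj_consistent_bi_pair unfolding proj_consistent_def by blast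

lemma proj_stable_if_bi_slices_proj_stable:
  assumes H: "multi_refinement A m S H h"
    and bi_stable: "\<forall>i<m. \<forall>j<m. i \<noteq> j \<longrightarrow>
                      proj_stable (bi_alg A i j) (bi_proj P i j) 2 (bi_slice S i j) (bi_ref h i j)"
  shows "proj_stable A P m S H"
  unfolding proj_stable_def
proof (intro ballI impI)
  fix R assume R: "R \<in> S" and "proj_consistent A P m R"
  then have cons: "proj_consistent (bi_alg A i j) (bi_proj P i j) 2 (bi_pair R i j)"
    if "i < m" "j < m" "i \<noteq> j" for i j
    using that proj_consistent_iff_bi_pairs by blast
  show "proj_consistent A P m (H R)"
  proof (rule iffD2[OF proj_consistent_iff_bi_pairs], intro allI impI)
    fix i j assume ij: "i < m" "j < m" "i \<noteq> j"
    have "H R i = h i (R i)" and "H R j = h j (R j)"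
      using multi_refinement_apply[OF H R] ij by simp_all
    then have refined_pair: "bi_ref h i j (bi_pair R i j) = bi_pair (H R) i j"
      unfolding bi_ref_bi_pair unfolding bi_pair_def by (intro restrict_ext) simp
    have "proj_stable (bi_alg A i j) (bi_proj P i j) 2 (bi_slice S i j) (bi_ref h i j)"
      using bi_stable ij by blast
    then show "proj_consistent (bi_alg A i j) (bi_proj P i j) 2 (bi_pair (H R) i j)"
      unfolding proj_stable_def refined_pair[symmetric]
      using bi_pair_in_bi_slice[OF R] cons[OF ij] by blast
  qed
qed

theorem proposition6p18:
  fixes A :: "nat \<Rightarrow> 'a nalg" and P :: "nat \<Rightarrow> nat \<Rightarrow> 'a \<Rightarrow> 'a" and m :: nat
    and S :: "(nat \<Rightarrow> 'a) set" and H :: "(nat \<Rightarrow> 'a) \<Rightarrow> (nat \<Rightarrow> 'a)"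
    and h :: "nat \<Rightarrow> 'a \<Rightarrow> 'a"
  assumes "multi_alg A P m"
    and "S \<subseteq> mcarrier A m"
    and "multi_refinement A m S H h"
  shows "((\<forall>i<m. \<forall>(E::nat set) N. card E = 3 \<longrightarrow> snetwork (A i) (slice S i) E N \<longrightarrow>
              sdcons (A i) E N \<longrightarrow> sdcons (A i) E (\<lambda>x y. h i (N x y)))
            \<longrightarrow> comp_stable TYPE('v) A m S H)
       \<and> ((\<forall>i<m. \<forall>j<m. i \<noteq> j \<longrightarrow>
              proj_stable (bi_alg A i j) (bi_proj P i j) 2 (bi_slice S i j) (bi_ref h i j))
            \<longrightarrow> proj_stable A P m S H)"
  using comp_stable_if_slices_triangle_stable[OF assms(3)]
    proj_stable_if_bi_slices_proj_stable[OF assms(3)]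
  by blast

end
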